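(* Let $V$ be a finite set of variables and $\mathcal C=\{C_1,\dots,C_m\}$ a set of betweenness constraints over $V$ containing no complete triple. Let $\phi:V\to\{0,1,2,3\}$ be chosen uniformly at random and let $X=w(\mathcal C,\phi)$. Then $\mathbb E[X^2]\ge \frac{11}{768}m$.
   Context: A betweenness constraint is $(v_i,\{v_j,v_k\})$ with $v_i,v_j,v_k\in V$ distinct; a bijection $\alpha:V\to\{1,\dots,|V|\}$ satisfies it if $\alpha(v_j)<\alpha(v_i)<\alpha(v_k)$ or $\alpha(v_k)<\alpha(v_i)<\alpha(v_j)$. For a constraint $C$, $vars(C)$ is its set of three variables; three distinct constraints $A,B,C\in\mathcal C$ form a complete triple if $vars(A)=vars(B)=vars(C)$. For $\phi:V\to\{0,1,2,3\}$ let $\ell_i(\phi)=|\phi^{-1}(i)|$. A random $\phi$-compatible bijection $\alpha$ is obtained by assigning, uniformly at random, the values $\sum_{i<j}\ell_i(\phi)+1,\dots,\sum_{i\le j}\ell_i(\phi)$ bijectively to the variables $v$ with $\phi(v)=j$, for each $j=0,1,2,3$. For a constraint $C_p$ let $\nu_p(\alpha)=1$ if $\alpha$ satisfies $C_p$ and $0$ otherwise; define $w(C_p,\phi)=\mathbb E[\nu_p(\alpha)]-1/3$, the expectation over a random $\phi$-compatible bijection $\alpha$ for fixed $\phi$, and $w(\mathcal C,\phi)=\sum_{p=1}^m w(C_p,\phi)$. *)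

theory Defs
  imports Complex_Main "HOL-Library.FuncSet"
begin

text \<open>A betweenness constraint (v_i, {v_j, v_k}) is represented as a pair (x, P)
  with x the middle variable and P the unordered pair of outer variables.\<close>
type_synonym 'a btw = "'a \<times> 'a set"

definition btw_constraint :: "'a set \<Rightarrow> 'a btw \<Rightarrow> bool" where
  "btw_constraint V c \<longleftrightarrow>
     (\<exists>x y z. c = (x, {y, z}) \<and> x \<in> V \<and> y \<in> V \<and> z \<in> V \<and> x \<noteq> y \<and> x \<noteq> z \<and> y \<noteq> z)"

definition vars :: "'a btw \<Rightarrow> 'a set" where
  "vars c = insert (fst c) (snd c)"

definition satisfies :: "('a \<Rightarrow> nat) \<Rightarrow> 'a btw \<Rightarrow> bool" where
  "satisfies \<alpha> c \<longleftrightarrow>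
     (\<exists>y z. snd c = {y, z} \<and> \<alpha> y < \<alpha> (fst c) \<and> \<alpha> (fst c) < \<alpha> z)"

definition has_complete_triple :: "'a btw set \<Rightarrow> bool" where
  "has_complete_triple \<C> \<longleftrightarrow>
     (\<exists>A\<in>\<C>. \<exists>B\<in>\<C>. \<exists>C\<in>\<C>. A \<noteq> B \<and> A \<noteq> C \<and> B \<noteq> C \<and>
        vars A = vars B \<and> vars B = vars C)"

definition lvl :: "'a set \<Rightarrow> ('a \<Rightarrow> nat) \<Rightarrow> nat \<Rightarrow> nat" where
  "lvl V \<phi> i = card {v \<in> V. \<phi> v = i}"

definition compatible :: "'a set \<Rightarrow> ('a \<Rightarrow> nat) \<Rightarrow> ('a \<Rightarrow> nat) set" where
  "compatible V \<phi> =
     {\<alpha> \<in> V \<rightarrow>\<^sub>E {1..card V}. bij_betw \<alpha> V {1..card V} \<and>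
        (\<forall>v\<in>V. (\<Sum>i<\<phi> v. lvl V \<phi> i) + 1 \<le> \<alpha> v \<and> \<alpha> v \<le> (\<Sum>i\<le>\<phi> v. lvl V \<phi> i))}"

definition w :: "'a set \<Rightarrow> 'a btw \<Rightarrow> ('a \<Rightarrow> nat) \<Rightarrow> real" where
  "w V c \<phi> = real (card {\<alpha> \<in> compatible V \<phi>. satisfies \<alpha> c}) / real (card (compatible V \<phi>)) - 1/3"

definition W :: "'a set \<Rightarrow> 'a btw set \<Rightarrow> ('a \<Rightarrow> nat) \<Rightarrow> real" where
  "W V \<C> \<phi> = (\<Sum>c\<in>\<C>. w V c \<phi>)"

end

theory Submission
  imports Defs "HOL-Library.Product_Lexorder" "HOL-Combinatorics.Transposition"
begin

text \<open>For any test function \<open>g\<close>, \<open>E[X\<^sup>2] \<ge> E[(2X - g) g]\<close>. Take \<open>g = \<Sum>\<^sub>d h\<^sub>d\<close>,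
  where \<open>h\<^sub>d\<close> reads a fixed \<open>4\<times>4\<times>4\<close> table at the levels of the three variables of \<open>d\<close>, the
  table having zero sums along every index. Since \<open>w\<^sub>c\<close> only depends on the levels of the
  variables of \<open>c\<close>, averaging over a variable of \<open>d\<close> outside \<open>c\<close> shows \<open>E[(2w\<^sub>c - h\<^sub>c) h\<^sub>d] = 0\<close>
  unless \<open>d\<close> lives on the same triple as \<open>c\<close>. On a common triple these correlations are
  \<open>11/384\<close> for \<open>d = c\<close> and \<open>-11/768\<close> for the two other constraints; without complete triples
  at most one of the latter occurs, so every constraint contributes at least \<open>11/768\<close>.\<close>

section \<open>Compatible bijections\<close>

lemma card_level_less:
  assumes "finite V"
  shows "card {v\<in>V. \<phi> v < p} = (\<Sum>i<p. lvl V \<phi> i)"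
proof (induction p)
  case 0
  then show ?case by simp
next
  case (Suc p)
  have "{v\<in>V. \<phi> v < Suc p} = {v\<in>V. \<phi> v < p} \<union> {v\<in>V. \<phi> v = p}" by auto
  moreover have "card ({v\<in>V. \<phi> v < p} \<union> {v\<in>V. \<phi> v = p}) = card {v\<in>V. \<phi> v < p} + card {v\<in>V. \<phi> v = p}"
    by (rule card_Un_disjoint) (use assms in auto)
  ultimately show ?case using Suc by (simp add: lvl_def)
qed

lemma compatible_level_mono:
  assumes "\<alpha> \<in> compatible V \<phi>" "u \<in> V" "v \<in> V" "\<phi> u < \<phi> v"
  shows "\<alpha> u < \<alpha> v"
proof -
  have "\<alpha> u \<le> (\<Sum>i<Suc (\<phi> u). lvl V \<phi> i)"
    using assms unfolding compatible_def by (auto simp: lessThan_Suc_atMost)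
  also have "\<dots> \<le> (\<Sum>i<\<phi> v. lvl V \<phi> i)" by (rule sum_mono2) (use assms(4) in auto)
  also have "\<dots> < \<alpha> v" using assms unfolding compatible_def by auto
  finally show ?thesis .
qed

lemma finite_compatible: "finite V \<Longrightarrow> finite (compatible V \<phi>)"
  by (rule finite_subset[of _ "V \<rightarrow>\<^sub>E {1..card V}"]) (auto simp: compatible_def finite_PiE)

definition rank :: "('a \<Rightarrow> 'b::linorder) \<Rightarrow> 'a set \<Rightarrow> 'a \<Rightarrow> nat" where
  "rank key V v = card {u\<in>V. key u \<le> key v}"

lemma rank_strict_mono:
  assumes "finite V" "u \<in> V" "v \<in> V" "key u < key v"
  shows "rank key V u < rank key V v"
proof -
  have "{w\<in>V. key w \<le> key u} \<subset> {w\<in>V. key w \<le> key v}"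
    using assms by (auto intro: order_trans dest: leD)
  then show ?thesis unfolding rank_def by (rule psubset_card_mono[rotated]) (use assms in simp)
qed

lemma bij_betw_rank:
  assumes "finite V" "inj_on key V"
  shows "bij_betw (rank key V) V {1..card V}"
proof -
  have inj: "inj_on (rank key V) V"
  proof (rule inj_onI)
    fix u v assume uv: "u \<in> V" "v \<in> V" "rank key V u = rank key V v"
    then have "key u = key v" using rank_strict_mono[OF assms(1)] by (metis less_irrefl linorder_neqE)
    then show "u = v" using assms(2) uv by (auto dest: inj_onD)
  qed
  have "rank key V ` V \<subseteq> {1..card V}"
  proof
    fix n assume "n \<in> rank key V ` V"
    then obtain v where v: "v \<in> V" "n = rank key V v" by blast
    have "0 < rank key V v" unfolding rank_def using assms(1) v(1) by (auto simp: card_gt_0_iff)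
    moreover have "rank key V v \<le> card V" unfolding rank_def by (rule card_mono) (use assms in auto)
    ultimately show "n \<in> {1..card V}" using v by simp
  qed
  moreover have "card (rank key V ` V) = card {1..card V}" by (simp add: card_image[OF inj])
  ultimately have "rank key V ` V = {1..card V}" by (intro card_subset_eq) auto
  with inj show ?thesis by (simp add: bij_betw_def)
qed

text \<open>Ranking the variables by level, ties broken by an arbitrary injection into \<open>nat\<close>,
  gives a compatible bijection.\<close>
lemma compatible_nonempty:
  assumes "finite V"
  shows "compatible V \<phi> \<noteq> {}"
proof -
  obtain r :: "'a \<Rightarrow> nat" where "inj_on r V" using assms finite_imp_inj_to_nat_seg by blast
  define key where "key v = (\<phi> v, r v)" for v
  define \<alpha> where "\<alpha> = restrict (rank key V) V"
  have "inj_on key V" using \<open>inj_on r V\<close> by (auto simp: key_def inj_on_def)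
  then have bij: "bij_betw \<alpha> V {1..card V}"
    using bij_betw_rank[OF assms] by (simp add: \<alpha>_def bij_betw_def inj_on_def)
  have "(\<Sum>i<\<phi> v. lvl V \<phi> i) + 1 \<le> \<alpha> v \<and> \<alpha> v \<le> (\<Sum>i\<le>\<phi> v. lvl V \<phi> i)" if v: "v \<in> V" for v
  proof
    have "card ({u\<in>V. \<phi> u < \<phi> v} \<union> {v}) \<le> card {u\<in>V. key u \<le> key v}"
      by (rule card_mono) (use v assms in \<open>auto simp: key_def\<close>)
    also have "\<dots> = \<alpha> v" using v by (simp add: \<alpha>_def rank_def)
    finally have "card ({u\<in>V. \<phi> u < \<phi> v} \<union> {v}) \<le> \<alpha> v" .
    moreover have "card ({u\<in>V. \<phi> u < \<phi> v} \<union> {v}) = card {u\<in>V. \<phi> u < \<phi> v} + 1"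
      using assms by (simp add: card_Un_disjoint)
    ultimately show "(\<Sum>i<\<phi> v. lvl V \<phi> i) + 1 \<le> \<alpha> v" using assms by (simp add: card_level_less)
    have "\<alpha> v = card {u\<in>V. key u \<le> key v}" using v by (simp add: \<alpha>_def rank_def)
    also have "\<dots> \<le> card {u\<in>V. \<phi> u < Suc (\<phi> v)}"
      by (rule card_mono) (use assms in \<open>auto simp: key_def\<close>)
    finally have "\<alpha> v \<le> card {u\<in>V. \<phi> u < Suc (\<phi> v)}" .
    then show "\<alpha> v \<le> (\<Sum>i\<le>\<phi> v. lvl V \<phi> i)" using assms by (simp add: card_level_less lessThan_Suc_atMost)
  qed
  moreover have "\<alpha> \<in> V \<rightarrow>\<^sub>E {1..card V}" using bij by (auto simp: \<alpha>_def bij_betw_def)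
  ultimately have "\<alpha> \<in> compatible V \<phi>" using bij by (simp add: compatible_def)
  then show ?thesis by blast
qed

lemma compatible_comp_transpose:
  assumes "\<alpha> \<in> compatible V \<phi>" "u \<in> V" "v \<in> V" "\<phi> u = \<phi> v"
  shows "\<alpha> \<circ> transpose u v \<in> compatible V \<phi>"
proof -
  have "bij_betw (transpose u v) V V" using assms(2,3) by simp
  then have "bij_betw (\<alpha> \<circ> transpose u v) V {1..card V}"
    using assms(1) by (auto simp: compatible_def intro: bij_betw_trans)
  moreover have "\<alpha> \<circ> transpose u v \<in> V \<rightarrow>\<^sub>E {1..card V}"
    using assms(1-3) by (auto simp: compatible_def PiE_iff extensional_def transpose_def)
  moreover have "(\<Sum>i<\<phi> x. lvl V \<phi> i) + 1 \<le> \<alpha> (transpose u v x) \<and> \<alpha> (transpose u v x) \<le> (\<Sum>i\<le>\<phi> x. lvl V \<phi> i)"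
    if "x \<in> V" for x
  proof -
    have "transpose u v x \<in> V" "\<phi> (transpose u v x) = \<phi> x"
      using that assms(2-4) by (auto simp: transpose_def)
    then show ?thesis using assms(1) by (auto simp: compatible_def)
  qed
  ultimately show ?thesis by (simp add: compatible_def)
qed

lemma card_compatible_transpose:
  assumes "u \<in> V" "v \<in> V" "\<phi> u = \<phi> v"
  shows "card {\<alpha>\<in>compatible V \<phi>. P (\<alpha> \<circ> transpose u v)} = card {\<alpha>\<in>compatible V \<phi>. P \<alpha>}"
proof (rule bij_betw_same_card[of "\<lambda>\<alpha>. \<alpha> \<circ> transpose u v"])
  show "bij_betw (\<lambda>\<alpha>. \<alpha> \<circ> transpose u v)
          {\<alpha>\<in>compatible V \<phi>. P (\<alpha> \<circ> transpose u v)} {\<alpha>\<in>compatible V \<phi>. P \<alpha>}"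
    by (rule bij_betw_byWitness[where f' = "\<lambda>\<alpha>. \<alpha> \<circ> transpose u v"])
      (use assms compatible_comp_transpose in \<open>auto simp: comp_assoc\<close>)
qed

definition between :: "('a \<Rightarrow> nat) \<Rightarrow> 'a \<Rightarrow> 'a \<Rightarrow> 'a \<Rightarrow> bool" where
  "between \<alpha> x y z \<longleftrightarrow> (\<alpha> y < \<alpha> x \<and> \<alpha> x < \<alpha> z) \<or> (\<alpha> z < \<alpha> x \<and> \<alpha> x < \<alpha> y)"

lemma satisfies_iff_between: "satisfies \<alpha> (x, {y, z}) \<longleftrightarrow> between \<alpha> x y z"
  unfolding satisfies_def between_def by (auto simp: doubleton_eq_iff)

lemma between_compatible_never:
  assumes "\<alpha> \<in> compatible V \<phi>" "x \<in> V" "y \<in> V" "z \<in> V"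
    and "(\<phi> x < \<phi> y \<and> \<phi> x < \<phi> z) \<or> (\<phi> y < \<phi> x \<and> \<phi> z < \<phi> x)"
  shows "\<not> between \<alpha> x y z"
  using assms compatible_level_mono[OF assms(1)] unfolding between_def by (meson less_asym)

lemma between_compatible_always:
  assumes "\<alpha> \<in> compatible V \<phi>" "x \<in> V" "y \<in> V" "z \<in> V"
    and "(\<phi> y < \<phi> x \<and> \<phi> x < \<phi> z) \<or> (\<phi> z < \<phi> x \<and> \<phi> x < \<phi> y)"
  shows "between \<alpha> x y z"
  using assms compatible_level_mono[OF assms(1)] unfolding between_def by blast

lemma card_compatible_between_split:
  assumes "finite V" "x \<in> V" "y \<in> V" "z \<in> V" "x \<noteq> y" "x \<noteq> z" "y \<noteq> z"
  shows "card (compatible V \<phi>) = card {\<alpha>\<in>compatible V \<phi>. between \<alpha> x y z}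
           + card {\<alpha>\<in>compatible V \<phi>. between \<alpha> y x z} + card {\<alpha>\<in>compatible V \<phi>. between \<alpha> z x y}"
proof -
  define A where "A = {\<alpha>\<in>compatible V \<phi>. between \<alpha> x y z}"
  define B where "B = {\<alpha>\<in>compatible V \<phi>. between \<alpha> y x z}"
  define C where "C = {\<alpha>\<in>compatible V \<phi>. between \<alpha> z x y}"
  have fin: "finite A" "finite B" "finite C"
    using finite_compatible[OF assms(1)] by (simp_all add: A_def B_def C_def)
  have "\<alpha> x \<noteq> \<alpha> y \<and> \<alpha> x \<noteq> \<alpha> z \<and> \<alpha> y \<noteq> \<alpha> z" if "\<alpha> \<in> compatible V \<phi>" for \<alpha>
    using that assms(2-7) by (auto simp: compatible_def bij_betw_def dest: inj_onD)
  then have "compatible V \<phi> = A \<union> B \<union> C"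
    unfolding A_def B_def C_def between_def by (auto simp: linorder_neq_iff)
  also have "card \<dots> = card (A \<union> B) + card C"
    by (rule card_Un_disjoint) (use fin in \<open>auto simp: A_def B_def C_def between_def\<close>)
  also have "card (A \<union> B) = card A + card B"
    by (rule card_Un_disjoint) (use fin in \<open>auto simp: A_def B_def between_def\<close>)
  finally show ?thesis by (simp add: A_def B_def C_def)
qed

text \<open>Variables sharing a level are ordered uniformly at random, so the chance that the
  middle variable (level \<open>i\<close>) lies between the outer ones (levels \<open>j\<close>, \<open>k\<close>) depends on the
  levels alone.\<close>
definition between_prob :: "nat \<Rightarrow> nat \<Rightarrow> nat \<Rightarrow> real" where
  "between_prob i j k =
     (if j = k then (if i = j then 1/3 else 0)
      else if i = j \<or> i = k then 1/2
      else if (j < i \<and> i < k) \<or> (k < i \<and> i < j) then 1 else 0)"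

lemma w_eq_between_prob:
  assumes "finite V" "x \<in> V" "y \<in> V" "z \<in> V" "x \<noteq> y" "x \<noteq> z" "y \<noteq> z"
  shows "w V (x, {y, z}) \<phi> = between_prob (\<phi> x) (\<phi> y) (\<phi> z) - 1/3"
proof -
  define n where "n = real (card (compatible V \<phi>))"
  define bx where "bx = real (card {\<alpha>\<in>compatible V \<phi>. between \<alpha> x y z})"
  define "by" where "by = real (card {\<alpha>\<in>compatible V \<phi>. between \<alpha> y x z})"
  define bz where "bz = real (card {\<alpha>\<in>compatible V \<phi>. between \<alpha> z x y})"
  have w: "w V (x, {y, z}) \<phi> = bx / n - 1/3"
    by (simp add: w_def satisfies_iff_between bx_def n_def)
  have n: "n = bx + by + bz"
    using card_compatible_between_split[OF assms] by (simp add: n_def bx_def by_def bz_def)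
  have "n > 0"
    using finite_compatible[OF assms(1)] compatible_nonempty[OF assms(1)]
    by (simp add: n_def card_gt_0_iff)
  have bx_by: "bx = by" if "\<phi> x = \<phi> y"
    using card_compatible_transpose[OF assms(2,3) that, of "\<lambda>\<alpha>. between \<alpha> x y z"] assms(6,7)
    by (simp add: bx_def by_def between_def)
  have bx_bz: "bx = bz" if "\<phi> x = \<phi> z"
    using card_compatible_transpose[OF assms(2,4) that, of "\<lambda>\<alpha>. between \<alpha> x z y"] assms(5,7)
    by (simp add: bx_def bz_def between_def conj_commute disj_commute)
  consider (inner) "(\<phi> y < \<phi> x \<and> \<phi> x < \<phi> z) \<or> (\<phi> z < \<phi> x \<and> \<phi> x < \<phi> y)"
    | (outer) "(\<phi> x < \<phi> y \<and> \<phi> x < \<phi> z) \<or> (\<phi> y < \<phi> x \<and> \<phi> z < \<phi> x)"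
    | (all) "\<phi> x = \<phi> y" "\<phi> x = \<phi> z"
    | (xy) "\<phi> x = \<phi> y" "\<phi> x \<noteq> \<phi> z"
    | (xz) "\<phi> x = \<phi> z" "\<phi> x \<noteq> \<phi> y"
    by linarith
  then show ?thesis
  proof cases
    case inner
    have "{\<alpha>\<in>compatible V \<phi>. between \<alpha> x y z} = compatible V \<phi>"
      using between_compatible_always[OF _ assms(2-4) inner] by blast
    then show ?thesis using w \<open>n > 0\<close> inner by (auto simp: bx_def n_def between_prob_def)
  next
    case outer
    then have "bx = 0"
      using between_compatible_never[OF _ assms(2-4)] by (auto simp: bx_def card_eq_0_iff)
    then show ?thesis using w outer by (auto simp: between_prob_def)
  next
    case all
    then have "bx / n = 1/3" using n \<open>n > 0\<close> bx_by bx_bz by (simp add: field_simps)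
    then show ?thesis using w all by (simp add: between_prob_def)
  next
    case xy
    then have "(\<phi> z < \<phi> x \<and> \<phi> z < \<phi> y) \<or> (\<phi> x < \<phi> z \<and> \<phi> y < \<phi> z)" by linarith
    then have "bz = 0"
      using between_compatible_never[OF _ assms(4,2,3)] by (auto simp: bz_def card_eq_0_iff)
    then have "bx / n = 1/2" using n \<open>n > 0\<close> bx_by xy by (simp add: field_simps)
    then show ?thesis using w xy by (simp add: between_prob_def)
  next
    case xz
    then have "(\<phi> y < \<phi> x \<and> \<phi> y < \<phi> z) \<or> (\<phi> x < \<phi> y \<and> \<phi> z < \<phi> y)" by linarith
    then have "by = 0"
      using between_compatible_never[OF _ assms(3,2,4)] by (auto simp: by_def card_eq_0_iff)
    then have "bx / n = 1/2" using n \<open>n > 0\<close> bx_bz xz by (simp add: field_simps)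
    then show ?thesis using w xz by (simp add: between_prob_def)
  qed
qed

section \<open>Sums over level assignments\<close>

lemma sum_PiE_fix_coord:
  fixes G :: "('a \<Rightarrow> 'b) \<Rightarrow> 'c::comm_monoid_add"
  assumes "finite V" "finite S" "a \<in> V" "s \<in> S" "\<And>\<phi> t. Q (\<phi>(a := t)) = Q \<phi>"
  shows "(\<Sum>\<phi>\<in>{\<phi>\<in>V \<rightarrow>\<^sub>E S. Q \<phi>}. G \<phi>)
       = (\<Sum>\<phi>\<in>{\<phi>\<in>V \<rightarrow>\<^sub>E S. Q \<phi> \<and> \<phi> a = s}. \<Sum>t\<in>S. G (\<phi>(a := t)))"
proof -
  define A where "A = {\<phi>\<in>V \<rightarrow>\<^sub>E S. Q \<phi>}"
  define A\<^sub>s where "A\<^sub>s = {\<phi>\<in>V \<rightarrow>\<^sub>E S. Q \<phi> \<and> \<phi> a = s}"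
  have upd: "\<phi>(a := t) \<in> V \<rightarrow>\<^sub>E S" if "\<phi> \<in> V \<rightarrow>\<^sub>E S" "t \<in> S" for \<phi> t
    using that assms(3) by (auto simp: PiE_iff extensional_def)
  have fiber: "(\<Sum>\<phi>\<in>A\<^sub>s. G (\<phi>(a := t))) = (\<Sum>\<phi>\<in>{\<psi>\<in>A. \<psi> a = t}. G \<phi>)" if "t \<in> S" for t
  proof (rule sum.reindex_bij_betw)
    show "bij_betw (\<lambda>\<phi>. \<phi>(a := t)) A\<^sub>s {\<psi>\<in>A. \<psi> a = t}"
      by (rule bij_betw_byWitness[where f' = "\<lambda>\<phi>. \<phi>(a := s)"])
        (use that assms(3-5) in \<open>auto simp: A\<^sub>s_def A_def intro!: upd\<close>)
  qed
  have "(\<Sum>\<phi>\<in>A\<^sub>s. \<Sum>t\<in>S. G (\<phi>(a := t))) = (\<Sum>t\<in>S. \<Sum>\<phi>\<in>A\<^sub>s. G (\<phi>(a := t)))"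
    by (rule sum.swap)
  also have "\<dots> = (\<Sum>t\<in>S. \<Sum>\<phi>\<in>{\<psi>\<in>A. \<psi> a = t}. G \<phi>)"
    using fiber by simp
  also have "\<dots> = (\<Sum>\<phi>\<in>A. G \<phi>)"
    by (rule sum.group) (use assms in \<open>auto simp: A_def finite_PiE\<close>)
  finally show ?thesis by (simp add: A_def A\<^sub>s_def)
qed

lemma sum_PiE_mult_eq_0:
  fixes F G :: "('a \<Rightarrow> 'b) \<Rightarrow> 'c::comm_semiring_0"
  assumes "finite V" "finite S" "a \<in> V" "s \<in> S" "\<And>\<phi> t. F (\<phi>(a := t)) = F \<phi>"
    and "\<And>\<phi>. \<phi> \<in> V \<rightarrow>\<^sub>E S \<Longrightarrow> (\<Sum>t\<in>S. G (\<phi>(a := t))) = 0"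
  shows "(\<Sum>\<phi>\<in>V \<rightarrow>\<^sub>E S. F \<phi> * G \<phi>) = 0"
proof -
  have "(\<Sum>\<phi>\<in>V \<rightarrow>\<^sub>E S. F \<phi> * G \<phi>) = (\<Sum>\<phi>\<in>{\<phi>\<in>V \<rightarrow>\<^sub>E S. True}. F \<phi> * G \<phi>)" by simp
  also have "\<dots> = (\<Sum>\<phi>\<in>{\<phi>\<in>V \<rightarrow>\<^sub>E S. \<phi> a = s}. F \<phi> * (\<Sum>t\<in>S. G (\<phi>(a := t))))"
    using sum_PiE_fix_coord[OF assms(1-4), of "\<lambda>_. True" "\<lambda>\<phi>. F \<phi> * G \<phi>"] by (simp add: assms(5) sum_distrib_left)
  also have "\<dots> = 0" using assms(6) by simp
  finally show ?thesis .
qed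

lemma sum_PiE_three_coords:
  fixes F :: "'b \<Rightarrow> 'b \<Rightarrow> 'b \<Rightarrow> 'c::comm_semiring_1"
  assumes "finite V" "finite S" "s \<in> S" "x \<in> V" "y \<in> V" "z \<in> V" "x \<noteq> y" "x \<noteq> z" "y \<noteq> z"
  shows "(\<Sum>\<phi>\<in>V \<rightarrow>\<^sub>E S. F (\<phi> x) (\<phi> y) (\<phi> z))
    = of_nat (card {\<phi>\<in>V \<rightarrow>\<^sub>E S. \<phi> x = s \<and> \<phi> y = s \<and> \<phi> z = s})
      * (\<Sum>k\<in>S. \<Sum>j\<in>S. \<Sum>i\<in>S. F i j k)"
proof -
  note fix_coord = sum_PiE_fix_coord[OF assms(1-2) _ assms(3)]
  have "(\<Sum>\<phi>\<in>V \<rightarrow>\<^sub>E S. F (\<phi> x) (\<phi> y) (\<phi> z)) = (\<Sum>\<phi>\<in>{\<phi>\<in>V \<rightarrow>\<^sub>E S. True}. F (\<phi> x) (\<phi> y) (\<phi> z))"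
    by simp
  also have "\<dots> = (\<Sum>\<phi>\<in>{\<phi>\<in>V \<rightarrow>\<^sub>E S. \<phi> x = s}. \<Sum>i\<in>S. F i (\<phi> y) (\<phi> z))"
    using assms by (subst fix_coord[OF assms(4)]) auto
  also have "\<dots> = (\<Sum>\<phi>\<in>{\<phi>\<in>V \<rightarrow>\<^sub>E S. \<phi> x = s \<and> \<phi> y = s}. \<Sum>j\<in>S. \<Sum>i\<in>S. F i j (\<phi> z))"
    using assms by (subst fix_coord[OF assms(5)]) auto
  also have "\<dots> = (\<Sum>\<phi>\<in>{\<phi>\<in>V \<rightarrow>\<^sub>E S. (\<phi> x = s \<and> \<phi> y = s) \<and> \<phi> z = s}. \<Sum>k\<in>S. \<Sum>j\<in>S. \<Sum>i\<in>S. F i j k)"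
    using assms by (subst fix_coord[OF assms(6)]) auto
  finally show ?thesis by (simp add: conj_assoc)
qed

section \<open>A test function correlated with \<open>w\<close>\<close>

text \<open>Indexed by the levels of the middle and of the two outer variables. Among tables
  symmetric in the outer indices with zero sums along every index, this one makes the
  correlation constant of the overview above large.\<close>
definition test_table :: "int list list list" where
  "test_table =
    [[[0,5,-1,-4],[5,2,-2,-5],[-1,-2,2,1],[-4,-5,1,8]],
     [[-10,-1,7,4],[-1,0,2,-1],[7,2,-4,-5],[4,-1,-5,2]],
     [[2,-5,-1,4],[-5,-4,2,7],[-1,2,0,-1],[4,7,-1,-10]],
     [[8,1,-5,-4],[1,2,-2,-1],[-5,-2,2,5],[-4,-1,5,0]]]"

definition test_level :: "nat \<Rightarrow> nat \<Rightarrow> nat \<Rightarrow> real" where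
  "test_level i j k = real_of_int (test_table ! i ! min j k ! max j k) / 24"

lemma test_level_commute: "test_level i j k = test_level i k j"
  by (simp add: test_level_def min.commute max.commute)

lemma atLeastAtMost_0_3: "{0..3::nat} = {0, 1, 2, 3}" by auto

lemma test_level_sum_fst: "j \<le> 3 \<Longrightarrow> k \<le> 3 \<Longrightarrow> (\<Sum>i\<in>{0..3}. test_level i j k) = 0"
  by (auto simp: atLeastAtMost_0_3 le_Suc_eq numeral_3_eq_3 test_level_def test_table_def)

lemma test_level_sum_snd: "i \<le> 3 \<Longrightarrow> k \<le> 3 \<Longrightarrow> (\<Sum>j\<in>{0..3}. test_level i j k) = 0"
  by (auto simp: atLeastAtMost_0_3 le_Suc_eq numeral_3_eq_3 test_level_def test_table_def)

lemma test_level_sum_thd: "i \<le> 3 \<Longrightarrow> j \<le> 3 \<Longrightarrow> (\<Sum>k\<in>{0..3}. test_level i j k) = 0"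
  by (auto simp: atLeastAtMost_0_3 le_Suc_eq numeral_3_eq_3 test_level_def test_table_def)

definition cross_level :: "nat \<Rightarrow> nat \<Rightarrow> nat \<Rightarrow> real" where
  "cross_level i j k = 2 * (between_prob i j k - 1/3) - test_level i j k"

lemma cross_level_sum_self:
  "(\<Sum>k\<in>{0..3}. \<Sum>j\<in>{0..3}. \<Sum>i\<in>{0..3}. cross_level i j k * test_level i j k) = 11/6"
  unfolding atLeastAtMost_0_3 cross_level_def by code_simp

lemma cross_level_sum_swap:
  "(\<Sum>k\<in>{0..3}. \<Sum>j\<in>{0..3}. \<Sum>i\<in>{0..3}. cross_level i j k * test_level j i k) = -11/12"
  unfolding atLeastAtMost_0_3 cross_level_def by code_simp

lemma cross_level_sum_rotate:
  "(\<Sum>k\<in>{0..3}. \<Sum>j\<in>{0..3}. \<Sum>i\<in>{0..3}. cross_level i j k * test_level k i j) = -11/12"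
  unfolding atLeastAtMost_0_3 cross_level_def by code_simp

definition test_constraint :: "'a btw \<Rightarrow> ('a \<Rightarrow> nat) \<Rightarrow> real" where
  "test_constraint c \<phi> =
     (SOME r. \<exists>y z. snd c = {y, z} \<and> r = test_level (\<phi> (fst c)) (\<phi> y) (\<phi> z))"

lemma test_constraint_eq: "test_constraint (x, {y, z}) \<phi> = test_level (\<phi> x) (\<phi> y) (\<phi> z)"
  unfolding test_constraint_def
  by (rule some_equality) (auto simp: doubleton_eq_iff test_level_commute)

definition cross_term :: "'a set \<Rightarrow> 'a btw \<Rightarrow> 'a btw \<Rightarrow> real" where
  "cross_term V c d =
     (\<Sum>\<phi>\<in>V \<rightarrow>\<^sub>E {0..3}. (2 * w V c \<phi> - test_constraint c \<phi>) * test_constraint d \<phi>)"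

lemma cross_term_eq_0:
  assumes "finite V" "btw_constraint V c" "btw_constraint V d" "vars d \<noteq> vars c"
  shows "cross_term V c d = 0"
proof -
  obtain x y z where c: "c = (x, {y, z})" "x \<in> V" "y \<in> V" "z \<in> V" "x \<noteq> y" "x \<noteq> z" "y \<noteq> z"
    using assms(2) by (auto simp: btw_constraint_def)
  obtain x' y' z' where d: "d = (x', {y', z'})" "x' \<in> V" "y' \<in> V" "z' \<in> V"
      "x' \<noteq> y'" "x' \<noteq> z'" "y' \<noteq> z'"
    using assms(3) by (auto simp: btw_constraint_def)
  have "finite (vars c)" "card (vars d) = card (vars c)" using c d by (simp_all add: vars_def)
  then have "\<not> vars d \<subseteq> vars c" using assms(4) card_subset_eq by blast
  then obtain a where a: "a \<in> {x', y', z'}" "a \<notin> {x, y, z}" using c(1) d(1) by (auto simp: vars_def)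
  have "a \<in> V" using a d by auto
  show ?thesis
    unfolding cross_term_def c(1) d(1)
  proof (rule sum_PiE_mult_eq_0[OF assms(1) finite_atLeastAtMost \<open>a \<in> V\<close>, of 0])
    show "2 * w V (x, {y, z}) (\<phi>(a := t)) - test_constraint (x, {y, z}) (\<phi>(a := t))
        = 2 * w V (x, {y, z}) \<phi> - test_constraint (x, {y, z}) \<phi>" for \<phi> t
      using a(2) by (auto simp: w_eq_between_prob[OF assms(1) c(2-)] test_constraint_eq)
    show "(\<Sum>t\<in>{0..3}. test_constraint (x', {y', z'}) (\<phi>(a := t))) = 0"
      if "\<phi> \<in> V \<rightarrow>\<^sub>E {0..3}" for \<phi>
    proof -
      have le3: "\<phi> v \<le> 3" if "v \<in> V" for v using \<open>\<phi> \<in> V \<rightarrow>\<^sub>E {0..3}\<close> that by auto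
      from a(1) consider "a = x'" | "a = y'" | "a = z'" by blast
      then show ?thesis
        by cases (use d le3 in \<open>simp_all add: test_constraint_eq test_level_sum_fst
                                  test_level_sum_snd test_level_sum_thd\<close>)
    qed
  qed simp
qed

lemma sum_PiE_levels:
  fixes F :: "nat \<Rightarrow> nat \<Rightarrow> nat \<Rightarrow> real"
  assumes "finite V" "x \<in> V" "y \<in> V" "z \<in> V" "x \<noteq> y" "x \<noteq> z" "y \<noteq> z"
  shows "(\<Sum>\<phi>\<in>V \<rightarrow>\<^sub>E {0..3}. F (\<phi> x) (\<phi> y) (\<phi> z))
       = real (card (V \<rightarrow>\<^sub>E {0..3::nat})) / 64 * (\<Sum>k\<in>{0..3}. \<Sum>j\<in>{0..3}. \<Sum>i\<in>{0..3}. F i j k)"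
proof -
  note three = sum_PiE_three_coords[OF assms(1) finite_atLeastAtMost _ assms(2-7), of 0]
  have "real (card (V \<rightarrow>\<^sub>E {0..3::nat})) = (\<Sum>\<phi>\<in>V \<rightarrow>\<^sub>E {0..3::nat}. (\<lambda>_ _ _. 1) (\<phi> x) (\<phi> y) (\<phi> z))"
    by simp
  also have "\<dots> = real (card {\<phi>\<in>V \<rightarrow>\<^sub>E {0..3::nat}. \<phi> x = 0 \<and> \<phi> y = 0 \<and> \<phi> z = 0}) * 64"
    by (subst three) simp_all
  finally show ?thesis by (subst three) simp_all
qed

lemma cross_term_same_vars:
  assumes "finite V" "x \<in> V" "y \<in> V" "z \<in> V" "x \<noteq> y" "x \<noteq> z" "y \<noteq> z"
  defines "N \<equiv> real (card (V \<rightarrow>\<^sub>E {0..3::nat}))"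
  shows "cross_term V (x, {y, z}) (x, {y, z}) = 11/384 * N"
    and "cross_term V (x, {y, z}) (y, {x, z}) = -11/768 * N"
    and "cross_term V (x, {y, z}) (z, {x, y}) = -11/768 * N"
proof -
  have cross: "2 * w V (x, {y, z}) \<phi> - test_level (\<phi> x) (\<phi> y) (\<phi> z) = cross_level (\<phi> x) (\<phi> y) (\<phi> z)"
    for \<phi> by (simp add: w_eq_between_prob[OF assms(1-7)] cross_level_def)
  show "cross_term V (x, {y, z}) (x, {y, z}) = 11/384 * N"
    using sum_PiE_levels[OF assms(1-7), of "\<lambda>i j k. cross_level i j k * test_level i j k"]
    by (simp add: cross_term_def cross test_constraint_eq cross_level_sum_self N_def)
  show "cross_term V (x, {y, z}) (y, {x, z}) = -11/768 * N"
    using sum_PiE_levels[OF assms(1-7), of "\<lambda>i j k. cross_level i j k * test_level j i k"]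
    by (simp add: cross_term_def cross test_constraint_eq cross_level_sum_swap N_def)
  show "cross_term V (x, {y, z}) (z, {x, y}) = -11/768 * N"
    using sum_PiE_levels[OF assms(1-7), of "\<lambda>i j k. cross_level i j k * test_level k i j"]
    by (simp add: cross_term_def cross test_constraint_eq cross_level_sum_rotate N_def)
qed

lemma btw_constraint_same_vars:
  assumes "btw_constraint V d" "vars d = {x, y, z}" "x \<noteq> y" "x \<noteq> z" "y \<noteq> z"
  shows "d \<in> {(x, {y, z}), (y, {x, z}), (z, {x, y})}"
proof -
  obtain x' P where d: "d = (x', P)" "x' \<notin> P" "card P = 2" "{x, y, z} = insert x' P"
    using assms(1,2) by (auto simp: btw_constraint_def vars_def)
  then have "P = {x, y, z} - {x'}" by auto
  moreover have "x' \<in> {x, y, z}" using d(4) by auto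
  ultimately show ?thesis using d(1) assms(3-5) by auto
qed

lemma sum_cross_term_ge:
  assumes "finite V" "finite \<C>" "\<forall>c\<in>\<C>. btw_constraint V c" "\<not> has_complete_triple \<C>" "c \<in> \<C>"
  shows "11/768 * real (card (V \<rightarrow>\<^sub>E {0..3::nat})) \<le> (\<Sum>d\<in>\<C>. cross_term V c d)"
proof -
  obtain x y z where c: "c = (x, {y, z})" "x \<in> V" "y \<in> V" "z \<in> V" "x \<noteq> y" "x \<noteq> z" "y \<noteq> z"
    using assms(3,5) by (auto simp: btw_constraint_def)
  define c\<^sub>y where "c\<^sub>y = (y, {x, z})"
  define c\<^sub>z where "c\<^sub>z = (z, {x, y})"
  define D where "D = {d\<in>\<C>. vars d = vars c}"
  have sum_D: "(\<Sum>d\<in>\<C>. cross_term V c d) = (\<Sum>d\<in>D. cross_term V c d)"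
    by (rule sum.mono_neutral_right[OF assms(2)])
      (use cross_term_eq_0[OF assms(1)] assms(3,5) in \<open>auto simp: D_def\<close>)
  have "D \<subseteq> {c, c\<^sub>y, c\<^sub>z}" "c \<in> D"
    using btw_constraint_same_vars[of V _ x y z] assms(3,5) c
    by (auto simp: D_def vars_def c\<^sub>y_def c\<^sub>z_def)
  moreover have "\<not> (c\<^sub>y \<in> D \<and> c\<^sub>z \<in> D)"
  proof
    assume "c\<^sub>y \<in> D \<and> c\<^sub>z \<in> D"
    then have "has_complete_triple \<C>"
      unfolding has_complete_triple_def D_def using assms(5) c(1,5-7)
      by (intro bexI[of _ c] bexI[of _ c\<^sub>y] bexI[of _ c\<^sub>z]) (auto simp: c\<^sub>y_def c\<^sub>z_def)
    with assms(4) show False ..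
  qed
  ultimately have "D = {c} \<or> D = {c, c\<^sub>y} \<or> D = {c, c\<^sub>z}" by blast
  moreover have "c \<noteq> c\<^sub>y" "c \<noteq> c\<^sub>z" using c by (auto simp: c\<^sub>y_def c\<^sub>z_def)
  ultimately show ?thesis
    using cross_term_same_vars[OF assms(1) c(2-7)] sum_D
    by (auto simp: c(1) c\<^sub>y_def c\<^sub>z_def)
qed

lemma sum_cross_terms_le_sum_W_sq:
  "(\<Sum>c\<in>\<C>. \<Sum>d\<in>\<C>. cross_term V c d) \<le> (\<Sum>\<phi>\<in>V \<rightarrow>\<^sub>E {0..3}. (W V \<C> \<phi>)\<^sup>2)"
proof -
  define g where "g \<phi> = (\<Sum>d\<in>\<C>. test_constraint d \<phi>)" for \<phi>
  have pointwise: "(2 * W V \<C> \<phi> - g \<phi>) * g \<phi>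
      = (\<Sum>c\<in>\<C>. \<Sum>d\<in>\<C>. (2 * w V c \<phi> - test_constraint c \<phi>) * test_constraint d \<phi>)" for \<phi>
  proof -
    have "2 * W V \<C> \<phi> - g \<phi> = (\<Sum>c\<in>\<C>. 2 * w V c \<phi> - test_constraint c \<phi>)"
      by (simp add: W_def g_def sum_subtractf sum_distrib_left)
    then show ?thesis by (simp only: g_def sum_product)
  qed
  have "(\<Sum>c\<in>\<C>. \<Sum>d\<in>\<C>. cross_term V c d)
      = (\<Sum>c\<in>\<C>. \<Sum>\<phi>\<in>V \<rightarrow>\<^sub>E {0..3}. \<Sum>d\<in>\<C>. (2 * w V c \<phi> - test_constraint c \<phi>) * test_constraint d \<phi>)"
    unfolding cross_term_def by (rule sum.cong[OF refl]) (rule sum.swap)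
  also have "\<dots> = (\<Sum>\<phi>\<in>V \<rightarrow>\<^sub>E {0..3}. (2 * W V \<C> \<phi> - g \<phi>) * g \<phi>)"
    unfolding pointwise by (rule sum.swap)
  also have "\<dots> \<le> (\<Sum>\<phi>\<in>V \<rightarrow>\<^sub>E {0..3}. (W V \<C> \<phi>)\<^sup>2)"
  proof (rule sum_mono)
    fix \<phi>
    have "0 \<le> (W V \<C> \<phi> - g \<phi>)\<^sup>2" by simp
    then show "(2 * W V \<C> \<phi> - g \<phi>) * g \<phi> \<le> (W V \<C> \<phi>)\<^sup>2"
      by (simp add: power2_eq_square algebra_simps)
  qed
  finally show ?thesis .
qed

theorem lemma7:
  fixes V :: "'a set" and \<C> :: "'a btw set"
  assumes "finite V"
    and "finite \<C>"
    and "\<forall>c\<in>\<C>. btw_constraint V c"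
    and "\<not> has_complete_triple \<C>"
  shows "(\<Sum>\<phi>\<in>V \<rightarrow>\<^sub>E {0..3::nat}. (W V \<C> \<phi>)^2) / real (card (V \<rightarrow>\<^sub>E {0..3::nat}))
           \<ge> 11 / 768 * real (card \<C>)"
proof -
  define N where "N = real (card (V \<rightarrow>\<^sub>E {0..3::nat}))"
  have "N > 0"
    using assms(1) by (simp add: N_def card_PiE)
  have "real (card \<C>) * (11/768 * N) \<le> (\<Sum>c\<in>\<C>. \<Sum>d\<in>\<C>. cross_term V c d)"
    using sum_mono[of \<C> "\<lambda>_. 11/768 * N"] sum_cross_term_ge[OF assms] by (simp add: N_def)
  also have "\<dots> \<le> (\<Sum>\<phi>\<in>V \<rightarrow>\<^sub>E {0..3}. (W V \<C> \<phi>)\<^sup>2)"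
    by (rule sum_cross_terms_le_sum_W_sq)
  finally have "11/768 * real (card \<C>) * N \<le> (\<Sum>\<phi>\<in>V \<rightarrow>\<^sub>E {0..3}. (W V \<C> \<phi>)\<^sup>2)"
    by (simp add: mult.commute mult.left_commute)
  with \<open>N > 0\<close> show ?thesis
    unfolding N_def[symmetric] by (simp add: pos_le_divide_eq)
qed

end
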